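(* Let $A\in M_{r\times m}(\mathbb{Z})$ have rank $r<m$, let $V\in M_m(\mathbb{Z})$ be unimodular with $AV$ in column Hermite normal form, $V=[V_{\mathfrak a}\ \ V_{\mathfrak b}]$ with $V_{\mathfrak a}$ the first $r$ columns, and $W=V^{-1}=\begin{bmatrix}W_{\mathfrak a}\\ W_{\mathfrak b}\end{bmatrix}$ with $W_{\mathfrak a}$ the first $r$ rows. Let $P\in M_{m\times s}(\mathbb{Z})$. Then there exists a unimodular matrix $C\in M_{m-r}(\mathbb{Z})$ such that the first $s$ columns of $V_{\mathfrak b}C$ are exactly the columns of $P$ if and only if (1) $AP=0$, and (2) $W_{\mathfrak b}P\in M_{(m-r)\times s}(\mathbb{Z})$ can be extended to a unimodular matrix, i.e. there is an integer matrix $E'$ with $m-r-s$ columns such that $[W_{\mathfrak b}P\ \ E']$ is unimodular.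
   Context: A unimodular matrix is a square integer matrix with determinant $\pm1$. Column Hermite normal form: lower triangular integer matrix with zero columns on the right, positive pivots each strictly below the previous one, zeros to the right of each pivot and entries to its left in its row nonnegative and smaller than it. Interpretation: for a variable vector $x=(x_1,\dots,x_m)$ of the model (time, dependent variables, parameters) and scaling matrix $A$, the monomials $x^{c}=\prod_i x_i^{c_i}$ for the columns $c$ of $V_{\mathfrak b}$ form a generating set of the rational invariants of the scaling action $x\mapsto\lambda^A*x$; replacing $V_{\mathfrak b}$ by $V_{\mathfrak b}C$ with $C$ unimodular gives another such generating set, and the condition says the monomials $x^{p}$ for columns $p$ of $P$ can be taken as part of it. *)

theory Defs
  imports Jordan_Normal_Form.DL_Rank Jordan_Normal_Form.Determinant
begin

definition unimodular :: "int mat \<Rightarrow> bool" where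
  "unimodular M \<longleftrightarrow> dim_row M = dim_col M \<and> (det M = 1 \<or> det M = -1)"

definition col_hnf :: "int mat \<Rightarrow> bool" where
  "col_hnf H \<longleftrightarrow> (\<exists>k p. k \<le> dim_col H \<and>
      (\<forall>j<k. p j < dim_row H) \<and>
      (\<forall>j j'. j < j' \<and> j' < k \<longrightarrow> p j < p j') \<and>
      (\<forall>j<k. H $$ (p j, j) > 0) \<and>
      (\<forall>j<k. \<forall>i<p j. H $$ (i, j) = 0) \<and>
      (\<forall>j<k. \<forall>j'. j < j' \<and> j' < dim_col H \<longrightarrow> H $$ (p j, j') = 0) \<and>
      (\<forall>j<k. \<forall>j'<j. 0 \<le> H $$ (p j, j') \<and> H $$ (p j, j') < H $$ (p j, j)) \<and>
      (\<forall>j. k \<le> j \<and> j < dim_col H \<longrightarrow> (\<forall>i<dim_row H. H $$ (i, j) = 0)))"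

definition col_block :: "int mat \<Rightarrow> nat \<Rightarrow> nat \<Rightarrow> int mat" where
  "col_block M a c = mat (dim_row M) c (\<lambda>(i, j). M $$ (i, a + j))"

definition row_block :: "int mat \<Rightarrow> nat \<Rightarrow> nat \<Rightarrow> int mat" where
  "row_block M a c = mat c (dim_col M) (\<lambda>(i, j). M $$ (a + i, j))"

definition append_cols :: "int mat \<Rightarrow> int mat \<Rightarrow> int mat" where
  "append_cols M N = mat (dim_row M) (dim_col M + dim_col N)
     (\<lambda>(i, j). if j < dim_col M then M $$ (i, j) else N $$ (i, j - dim_col M))"

definition int_rank :: "int mat \<Rightarrow> nat" where
  "int_rank M = vec_space.rank (dim_row M) (map_mat rat_of_int M)"

end

theory Submission
  imports Defs
begin

(* Since rank A = r, the column Hermite normal form A V has at most r pivot columns, so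
   A V = [H 0] with H an r x r block, and A = (A V) W = H W_a forces det H <> 0. Hence A X = 0 iff
   W_a X = 0 iff X = V_b W_b X: the columns of V_b form a basis of the integer kernel of A, with
   coordinate map W_b, and W_b V_b = 1. The first s columns of V_b C are V_b C_0, where C_0 consists
   of the first s columns of C; so they equal P exactly when P lies in the kernel and C_0 = W_b P,
   and such a unimodular C exists exactly when W_b P extends to a unimodular matrix. *)

lemma mat_mult_left_right_inverse_comm_ring:
  fixes A B :: "'a :: comm_ring_1 mat"
  assumes A: "A \<in> carrier_mat n n" and B: "B \<in> carrier_mat n n" and AB: "A * B = 1\<^sub>m n"
  shows "B * A = 1\<^sub>m n"
proof -
  have unit: "det B * det A = 1"
    using det_mult[OF A B] AB by (simp add: mult.commute)
  have adj: "adj_mat A \<in> carrier_mat n n" "adj_mat A * A = det A \<cdot>\<^sub>m 1\<^sub>m n"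
    using adj_mat[OF A] by auto
  have "det A \<cdot>\<^sub>m B = adj_mat A * A * B"
    using A B by (simp add: adj mult_smult_assoc_mat[OF one_carrier_mat B])
  also have "\<dots> = adj_mat A"
    unfolding assoc_mult_mat[OF adj(1) A B] AB using adj(1) by simp
  finally have scaled: "det A \<cdot>\<^sub>m (B * A) = det A \<cdot>\<^sub>m 1\<^sub>m n"
    using A B by (simp add: adj mult_smult_assoc_mat[symmetric])
  show ?thesis
  proof (rule eq_matI)
    fix i j assume "i < dim_row (1\<^sub>m n :: 'a mat)" "j < dim_col (1\<^sub>m n :: 'a mat)"
    then have "det A * (B * A) $$ (i, j) = det A * 1\<^sub>m n $$ (i, j)"
      using arg_cong[OF scaled, of "\<lambda>M. M $$ (i, j)"] A B by simp
    then show "(B * A) $$ (i, j) = 1\<^sub>m n $$ (i, j)"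
      using unit by (metis mult.assoc mult_1)
  qed (use A B in auto)
qed

lemma det_nonzero_mult_eq_0:
  fixes B Y :: "'a :: idom mat"
  assumes B: "B \<in> carrier_mat n n" and det: "det B \<noteq> 0"
    and Y: "Y \<in> carrier_mat n s" and BY: "B * Y = 0\<^sub>m n s"
  shows "Y = 0\<^sub>m n s"
proof -
  have "det B \<cdot>\<^sub>m Y = adj_mat B * B * Y"
    using adj_mat[OF B] B Y by (simp add: mult_smult_assoc_mat[OF one_carrier_mat Y])
  also have "\<dots> = 0\<^sub>m n s"
    unfolding assoc_mult_mat[OF adj_mat(1)[OF B] B Y] BY using adj_mat(1)[OF B] by simp
  finally have scaled: "det B \<cdot>\<^sub>m Y = 0\<^sub>m n s" .
  show ?thesis
  proof (rule eq_matI)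
    fix i j assume "i < dim_row (0\<^sub>m n s :: 'a mat)" "j < dim_col (0\<^sub>m n s :: 'a mat)"
    then have "det B * Y $$ (i, j) = 0"
      using arg_cong[OF scaled, of "\<lambda>M. M $$ (i, j)"] Y by simp
    then show "Y $$ (i, j) = 0\<^sub>m n s $$ (i, j)"
      using det \<open>i < dim_row (0\<^sub>m n s)\<close> \<open>j < dim_col (0\<^sub>m n s)\<close> by simp
  qed (use Y in auto)
qed

lemma col_block_carrier: "M \<in> carrier_mat n k \<Longrightarrow> col_block M a c \<in> carrier_mat n c"
  by (simp add: col_block_def)

lemma row_block_carrier: "M \<in> carrier_mat k m \<Longrightarrow> row_block M a c \<in> carrier_mat c m"
  by (simp add: row_block_def)

lemma col_block_mult:
  assumes "A \<in> carrier_mat n k" "B \<in> carrier_mat k m" "a + c \<le> m"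
  shows "col_block (A * B) a c = A * col_block B a c"
  by (rule eq_matI) (use assms in \<open>auto simp: col_block_def scalar_prod_def\<close>)

lemma row_block_mult:
  assumes "A \<in> carrier_mat n k" "B \<in> carrier_mat k m" "a + c \<le> n"
  shows "row_block (A * B) a c = row_block A a c * B"
  by (rule eq_matI) (use assms in \<open>auto simp: row_block_def scalar_prod_def\<close>)

lemma mult_eq_col_block_mult_row_block:
  assumes A: "A \<in> carrier_mat n k" and B: "B \<in> carrier_mat k m" and "r \<le> k"
  shows "A * B = col_block A 0 r * row_block B 0 r + col_block A r (k - r) * row_block B r (k - r)"
    (is "_ = ?R")
proof (rule eq_matI)
  obtain d where k: "k = r + d"
    using \<open>r \<le> k\<close> le_Suc_ex by blast
  fix i j assume "i < dim_row ?R" "j < dim_col ?R"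
  then have i: "i < n" and j: "j < m"
    using A B by (auto simp: col_block_def row_block_def)
  have "(A * B) $$ (i, j) = (\<Sum>l\<in>{0..<r + d}. A $$ (i, l) * B $$ (l, j))"
    using A B i j k by (simp add: scalar_prod_def)
  also have "\<dots> = (\<Sum>l\<in>{0..<r}. A $$ (i, l) * B $$ (l, j))
      + (\<Sum>l\<in>{0..<d}. A $$ (i, r + l) * B $$ (r + l, j))"
    by (induction d) (simp_all add: ac_simps)
  finally show "(A * B) $$ (i, j) = ?R $$ (i, j)"
    using A B i j k by (simp add: col_block_def row_block_def scalar_prod_def)
qed (use A B in \<open>auto simp: col_block_def row_block_def\<close>)

lemma row_block_mult_col_block_inverse:
  assumes W: "W \<in> carrier_mat m m" and V: "V \<in> carrier_mat m m" and WV: "W * V = 1\<^sub>m m"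
    and le: "a + c \<le> m"
  shows "row_block W a c * col_block V a c = 1\<^sub>m c"
proof -
  have "row_block W a c * col_block V a c = row_block (W * col_block V a c) a c"
    by (rule row_block_mult[OF W col_block_carrier[OF V] le, symmetric])
  also have "W * col_block V a c = col_block (1\<^sub>m m) a c"
    unfolding WV[symmetric] by (rule col_block_mult[OF W V le, symmetric])
  also have "row_block (col_block (1\<^sub>m m) a c) a c = 1\<^sub>m c"
    using le by (auto simp: col_block_def row_block_def)
  finally show ?thesis .
qed

lemma append_cols_carrier:
  assumes "X \<in> carrier_mat n s" "E \<in> carrier_mat n t"
  shows "append_cols X E \<in> carrier_mat n (s + t)"
  using assms by (simp add: append_cols_def)

lemma append_cols_col_blocks:
  assumes "C \<in> carrier_mat n k" "s \<le> k"
  shows "append_cols (col_block C 0 s) (col_block C s (k - s)) = C"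
  by (rule eq_matI) (use assms in \<open>auto simp: append_cols_def col_block_def\<close>)

lemma col_block_append_cols:
  assumes "X \<in> carrier_mat n s"
  shows "col_block (append_cols X E) 0 s = X"
  by (rule eq_matI) (use assms in \<open>auto simp: append_cols_def col_block_def\<close>)

lemma col_hnf_col_block_zero:
  assumes H: "H \<in> carrier_mat r m" and hnf: "col_hnf H" and "r \<le> m"
  shows "col_block H r (m - r) = 0\<^sub>m r (m - r)"
proof -
  obtain k p where pivot_rows: "\<forall>j<k. p j < r"
    and pivots_increase: "\<forall>j j'. j < j' \<and> j' < k \<longrightarrow> p j < p j'"
    and zero_cols: "\<forall>j. k \<le> j \<and> j < m \<longrightarrow> (\<forall>i<r. H $$ (i, j) = 0)"
    using hnf H unfolding col_hnf_def by auto
  have "inj_on p {..<k}"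
    by (rule strict_mono_on_imp_inj_on) (use pivots_increase in \<open>auto simp: strict_mono_on_def\<close>)
  moreover have "p ` {..<k} \<subseteq> {..<r}"
    using pivot_rows by auto
  ultimately have "k \<le> r"
    using card_inj_on_le[of p "{..<k}" "{..<r}"] by simp
  then show ?thesis
    by (intro eq_matI) (use H zero_cols in \<open>auto simp: col_block_def\<close>)
qed

lemma (in vec_space) full_rank_nonsingular_minor:
  assumes A: "A \<in> carrier_mat n nc" and rank: "rank A = n"
  obtains G where "G \<in> carrier_mat nc n" "det (A * G) \<noteq> 0"
proof -
  obtain S where S: "maximal S (\<lambda>T. T \<subseteq> set (cols A) \<and> lin_indpt T)"
    using maximal_exists[of "\<lambda>T. T \<subseteq> set (cols A) \<and> lin_indpt T" "card (set (cols A))" "{}"]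
    by (meson List.finite_set card_mono empty_iff empty_subsetI finite_lin_indpt2 rev_finite_subset)
  then have S_cols: "S \<subseteq> set (cols A)" and S_indpt: "lin_indpt S" and S_card: "card S = n"
    using rank_card_indpt[OF A S] rank unfolding maximal_def by auto
  obtain xs where xs: "set xs = S" "distinct xs"
    using finite_distinct_list[OF finite_subset[OF S_cols List.finite_set]] by blast
  have len: "length xs = n"
    using xs S_card distinct_card by fastforce
  have xs_carrier: "set xs \<subseteq> carrier_vec n"
    using xs S_cols A cols_dim by blast
  have "\<exists>i<nc. xs ! j = col A i" if "j < n" for j
  proof -
    have "xs ! j \<in> set (cols A)"
      using that xs S_cols len by auto
    then show ?thesis
      using A by (auto simp: in_set_conv_nth)
  qed
  then obtain g where g: "\<And>j. j < n \<Longrightarrow> g j < nc \<and> xs ! j = col A (g j)"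
    by metis
  define G :: "'a mat" where "G = mat_of_cols nc (map (\<lambda>j. unit_vec nc (g j)) [0..<n])"
  have G: "G \<in> carrier_mat nc n"
    unfolding G_def using mat_of_cols_carrier(1)[of nc "map (\<lambda>j. unit_vec nc (g j)) [0..<n]"] by simp
  have AG: "A * G = mat_of_cols n xs"
    by (rule eq_matI) (use A g len in \<open>auto simp: G_def mat_of_cols_index\<close>)
  have M: "mat_of_cols n xs \<in> carrier_mat n n"
    using mat_of_cols_carrier(1)[of n xs] len by simp
  have "rank (mat_of_cols n xs) = n"
    using lin_indpt_full_rank[OF M] xs xs_carrier S_indpt by simp
  then have "det (A * G) \<noteq> 0"
    unfolding AG using det_rank_iff[OF M] by simp
  with G show thesis ..
qed

lemma int_rank_full_factor_det_nonzero:
  assumes A: "A = B * X" and B: "B \<in> carrier_mat r r" and X: "X \<in> carrier_mat r m"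
    and rank: "int_rank A = r"
  shows "det B \<noteq> 0"
proof -
  interpret vec_space "TYPE(rat)" r .
  let ?q = "map_mat rat_of_int"
  have qA: "?q A = ?q B * ?q X"
    unfolding A by (rule of_int_hom.mat_hom_mult[OF B X])
  have "?q A \<in> carrier_mat r m" "rank (?q A) = r"
    using A B X rank by (auto simp: int_rank_def)
  then obtain G where G: "G \<in> carrier_mat m r" and minor: "det (?q A * G) \<noteq> 0"
    by (rule full_rank_nonsingular_minor)
  have "det (?q A * G) = det (?q B) * det (?q X * G)"
    unfolding qA using B X G by (simp add: assoc_mult_mat[of _ r r _ m] det_mult[of _ r])
  with minor show ?thesis
    by auto
qed

lemma col_hnf_transform_last_cols_in_kernel:
  assumes A: "A \<in> carrier_mat r m" and V: "V \<in> carrier_mat m m"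
    and hnf: "col_hnf (A * V)" and "r \<le> m"
  shows "A * col_block V r (m - r) = 0\<^sub>m r (m - r)"
  using col_block_mult[OF A V, of r "m - r"] col_hnf_col_block_zero[OF _ hnf] A V \<open>r \<le> m\<close>
  by simp

lemma col_hnf_transform_leading_block_det_nonzero:
  assumes A: "A \<in> carrier_mat r m" and rank: "int_rank A = r" and "r \<le> m"
    and V: "V \<in> carrier_mat m m" and W: "W \<in> carrier_mat m m" and VW: "V * W = 1\<^sub>m m"
    and hnf: "col_hnf (A * V)"
  shows "det (col_block (A * V) 0 r) \<noteq> 0"
proof -
  let ?H = "A * V"
  have H: "?H \<in> carrier_mat r m"
    using A V by simp
  note Hr = col_block_carrier[OF H, of 0 r]
    and Wa = row_block_carrier[OF W, of 0 r] and Wb = row_block_carrier[OF W, of r "m - r"]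
  have "A = ?H * W"
    using A V W VW by (simp add: assoc_mult_mat[of A r m V m W m])
  also have "\<dots> = col_block ?H 0 r * row_block W 0 r + col_block ?H r (m - r) * row_block W r (m - r)"
    by (rule mult_eq_col_block_mult_row_block[OF H W \<open>r \<le> m\<close>])
  also have "\<dots> = col_block ?H 0 r * row_block W 0 r"
    using col_hnf_col_block_zero[OF H hnf \<open>r \<le> m\<close>] Hr Wa Wb by simp
  finally show ?thesis
    by (rule int_rank_full_factor_det_nonzero[OF _ Hr Wa rank])
qed

lemma col_hnf_transform_kernel:
  assumes A: "A \<in> carrier_mat r m" and rank: "int_rank A = r" and "r \<le> m"
    and V: "V \<in> carrier_mat m m" and W: "W \<in> carrier_mat m m" and VW: "V * W = 1\<^sub>m m"
    and hnf: "col_hnf (A * V)"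
    and X: "X \<in> carrier_mat m s" and AX: "A * X = 0\<^sub>m r s"
  shows "col_block V r (m - r) * (row_block W r (m - r) * X) = X"
proof -
  let ?n = "m - r"
  let ?Va = "col_block V 0 r" and ?Vb = "col_block V r ?n"
  let ?Wa = "row_block W 0 r" and ?Wb = "row_block W r ?n"
  note Hr = col_block_carrier[OF mult_carrier_mat[OF A V], of 0 r]
    and Va = col_block_carrier[OF V, of 0 r] and Vb = col_block_carrier[OF V, of r ?n]
    and Wa = row_block_carrier[OF W, of 0 r] and Wb = row_block_carrier[OF W, of r ?n]
  have "?Va * (?Wa * X) + ?Vb * (?Wb * X) = V * (W * X)"
    using mult_eq_col_block_mult_row_block[OF V _ \<open>r \<le> m\<close>, of "W * X" s] row_block_mult[OF W X]
      W X \<open>r \<le> m\<close>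
    by simp
  also have "\<dots> = X"
    using V W X VW by (simp add: assoc_mult_mat[of V m m W m X s, symmetric])
  finally have X_split: "?Va * (?Wa * X) + ?Vb * (?Wb * X) = X" .
  have "col_block (A * V) 0 r * (?Wa * X) = A * ?Va * (?Wa * X) + A * ?Vb * (?Wb * X)"
    using col_block_mult[OF A V] col_hnf_transform_last_cols_in_kernel[OF A V hnf] \<open>r \<le> m\<close> Hr Wa Wb X
    by simp
  also have "\<dots> = A * (?Va * (?Wa * X) + ?Vb * (?Wb * X))"
    using assoc_mult_mat[OF A Va mult_carrier_mat[OF Wa X]] assoc_mult_mat[OF A Vb mult_carrier_mat[OF Wb X]]
      mult_add_distrib_mat[OF A mult_carrier_mat[OF Va mult_carrier_mat[OF Wa X]]
        mult_carrier_mat[OF Vb mult_carrier_mat[OF Wb X]]]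
    by simp
  also have "\<dots> = A * X"
    by (simp only: X_split)
  also note AX
  finally have "?Wa * X = 0\<^sub>m r s"
    using col_hnf_transform_leading_block_det_nonzero[OF A rank \<open>r \<le> m\<close> V W VW hnf]
    by (intro det_nonzero_mult_eq_0[OF Hr _ mult_carrier_mat[OF Wa X]])
  with X_split show ?thesis
    using Va Vb Wb X by simp
qed

lemma prefix_of_basis_change_in_kernel_extendable:
  assumes Vb: "Vb \<in> carrier_mat m n" and Wb: "Wb \<in> carrier_mat n m" and A: "A \<in> carrier_mat r m"
    and AVb: "A * Vb = 0\<^sub>m r n" and WbVb: "Wb * Vb = 1\<^sub>m n"
    and C: "C \<in> carrier_mat n n" and "unimodular C" and "s \<le> n"
    and P: "col_block (Vb * C) 0 s = P"
  shows "A * P = 0\<^sub>m r s"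
    and "\<exists>E'. E' \<in> carrier_mat n (n - s) \<and> unimodular (append_cols (Wb * P) E')"
proof -
  note C0 = col_block_carrier[OF C, of 0 s]
  have P_eq: "P = Vb * col_block C 0 s"
    using P col_block_mult[OF Vb C, of 0 s] \<open>s \<le> n\<close> by simp
  show "A * P = 0\<^sub>m r s"
    unfolding P_eq using AVb C0 by (simp add: assoc_mult_mat[OF A Vb C0, symmetric])
  have "Wb * P = col_block C 0 s"
    unfolding P_eq using WbVb C0 by (simp add: assoc_mult_mat[OF Wb Vb C0, symmetric])
  then show "\<exists>E'. E' \<in> carrier_mat n (n - s) \<and> unimodular (append_cols (Wb * P) E')"
    using append_cols_col_blocks[OF C \<open>s \<le> n\<close>] col_block_carrier[OF C] \<open>unimodular C\<close>
    by metis
qed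

lemma prefix_of_basis_change_eq_if_extendable:
  assumes Vb: "Vb \<in> carrier_mat m n" and Wb: "Wb \<in> carrier_mat n m" and P: "P \<in> carrier_mat m s"
    and P_coords: "Vb * (Wb * P) = P"
    and "s \<le> n" and E': "E' \<in> carrier_mat n (n - s)"
    and unimod: "unimodular (append_cols (Wb * P) E')"
  shows "\<exists>C. C \<in> carrier_mat n n \<and> unimodular C \<and> col_block (Vb * C) 0 s = P"
proof -
  let ?C = "append_cols (Wb * P) E'"
  have WbP: "Wb * P \<in> carrier_mat n s"
    using Wb P by simp
  have C: "?C \<in> carrier_mat n n"
    using append_cols_carrier[OF WbP E'] \<open>s \<le> n\<close> by (metis le_add_diff_inverse)
  have "col_block (Vb * ?C) 0 s = P"
    using col_block_mult[OF Vb C, of 0 s] col_block_append_cols[OF WbP] \<open>s \<le> n\<close> P_coords by simp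
  with C unimod show ?thesis
    by blast
qed

theorem mainTheorem4:
  fixes A V W P :: "int mat" and r m s :: nat
  assumes A_dim: "A \<in> carrier_mat r m"
    and rank_A: "int_rank A = r"
    and r_lt_m: "r < m"
    and V_dim: "V \<in> carrier_mat m m"
    and V_unimod: "unimodular V"
    and AV_hnf: "col_hnf (A * V)"
    and W_dim: "W \<in> carrier_mat m m"
    and W_inv: "V * W = 1\<^sub>m m"
    and P_dim: "P \<in> carrier_mat m s"
  shows "(\<exists>C. C \<in> carrier_mat (m - r) (m - r) \<and> unimodular C \<and> s \<le> m - r \<and>
            col_block (col_block V r (m - r) * C) 0 s = P)
     \<longleftrightarrow> (A * P = 0\<^sub>m r s \<and>
          (\<exists>E'. s \<le> m - r \<and> E' \<in> carrier_mat (m - r) (m - r - s) \<and>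
             unimodular (append_cols (row_block W r (m - r) * P) E')))"
proof -
  let ?n = "m - r"
  let ?Vb = "col_block V r ?n" and ?Wb = "row_block W r ?n"
  have "r \<le> m"
    using r_lt_m by simp
  note Vb = col_block_carrier[OF V_dim, of r ?n] and Wb = row_block_carrier[OF W_dim, of r ?n]
  have AVb: "A * ?Vb = 0\<^sub>m r ?n"
    by (rule col_hnf_transform_last_cols_in_kernel[OF A_dim V_dim AV_hnf \<open>r \<le> m\<close>])
  have WbVb: "?Wb * ?Vb = 1\<^sub>m ?n"
    using row_block_mult_col_block_inverse[OF W_dim V_dim _, of r ?n]
      mat_mult_left_right_inverse_comm_ring[OF V_dim W_dim W_inv] \<open>r \<le> m\<close>
    by simp
  show ?thesis
  proof
    assume "\<exists>C. C \<in> carrier_mat ?n ?n \<and> unimodular C \<and> s \<le> ?n \<and> col_block (?Vb * C) 0 s = P"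
    then show "A * P = 0\<^sub>m r s \<and> (\<exists>E'. s \<le> ?n \<and> E' \<in> carrier_mat ?n (?n - s) \<and>
        unimodular (append_cols (?Wb * P) E'))"
      using prefix_of_basis_change_in_kernel_extendable[OF Vb Wb A_dim AVb WbVb] by blast
  next
    assume "A * P = 0\<^sub>m r s \<and> (\<exists>E'. s \<le> ?n \<and> E' \<in> carrier_mat ?n (?n - s) \<and>
        unimodular (append_cols (?Wb * P) E'))"
    moreover have "A * P = 0\<^sub>m r s \<Longrightarrow> ?Vb * (?Wb * P) = P"
      by (rule col_hnf_transform_kernel[OF A_dim rank_A \<open>r \<le> m\<close> V_dim W_dim W_inv AV_hnf P_dim])
    ultimately show "\<exists>C. C \<in> carrier_mat ?n ?n \<and> unimodular C \<and> s \<le> ?n \<and> col_block (?Vb * C) 0 s = P"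
      using prefix_of_basis_change_eq_if_extendable[OF Vb Wb P_dim] by blast
  qed
qed

end
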